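(* Let $(X,d)$ be a complete metric space, $k\ge2$, $0<\rho<1$, and $\mu:X^k\to X$ a nonexpansive, coordinatewise $\rho$-contractive $k$-mean. Then the barycentric operator $\beta$ of $\mu$ is power convergent, and hence there exists a unique continuous $(k+1)$-mean $\tilde\mu:X^{k+1}\to X$ that $\beta$-extends $\mu$. Furthermore, $\tilde\mu$ is nonexpansive and coordinatewise $\rho$-contractive.
   Context: A $k$-mean is a map $\mu:X^k\to X$ with $\mu(x,\ldots,x)=x$. Nonexpansive: $d(\mu(\mathbf{x}),\mu(\mathbf{y}))\le\max_j d(x_j,y_j)$ for all $\mathbf{x},\mathbf{y}\in X^k$. Coordinatewise $\rho$-contractive: $d(\mu(\mathbf{x}),\mu(\mathbf{y}))\le\rho\,d(x_j,y_j)$ whenever $\mathbf{x},\mathbf{y}$ differ only in coordinate $j$. Barycentric operator: $\beta(\mathbf{x})_j=\mu(x_1,\ldots,x_{j-1},x_{j+1},\ldots,x_{k+1})$ on $X^{k+1}$; power convergent: for each $\mathbf{x}$, $\beta^n(\mathbf{x})\to(x^*,\ldots,x^* )$ for some $x^*$. A $(k+1)$-mean $\nu$ $\beta$-extends $\mu$ if $\beta^n(\mathbf{x})\to(\nu(\mathbf{x}),\ldots,\nu(\mathbf{x}))$ for every $\mathbf{x}$. *)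

theory Defs
  imports "HOL-Analysis.Analysis"
begin

text \<open>Points of X^k are represented as lists of length k.
  A map X^k -> X is a function on lists; only its values on lists of length k matter.\<close>

definition is_mean :: "nat \<Rightarrow> ('a list \<Rightarrow> 'a) \<Rightarrow> bool" where
  "is_mean k \<mu> \<longleftrightarrow> (\<forall>x. \<mu> (replicate k x) = x)"

definition nonexpansive_mean :: "nat \<Rightarrow> ('a::metric_space list \<Rightarrow> 'a) \<Rightarrow> bool" where
  "nonexpansive_mean k \<mu> \<longleftrightarrow>
     (\<forall>xs ys. length xs = k \<longrightarrow> length ys = k \<longrightarrow>
        dist (\<mu> xs) (\<mu> ys) \<le> Max {dist (xs ! j) (ys ! j) | j. j < k})"

definition coord_contractive :: "nat \<Rightarrow> real \<Rightarrow> ('a::metric_space list \<Rightarrow> 'a) \<Rightarrow> bool" where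
  "coord_contractive k \<rho> \<mu> \<longleftrightarrow>
     (\<forall>xs ys j. length xs = k \<longrightarrow> length ys = k \<longrightarrow> j < k \<longrightarrow>
        (\<forall>i<k. i \<noteq> j \<longrightarrow> xs ! i = ys ! i) \<longrightarrow>
        dist (\<mu> xs) (\<mu> ys) \<le> \<rho> * dist (xs ! j) (ys ! j))"

definition barycentric :: "nat \<Rightarrow> ('a list \<Rightarrow> 'a) \<Rightarrow> 'a list \<Rightarrow> 'a list" where
  "barycentric k \<mu> xs = map (\<lambda>j. \<mu> (take j xs @ drop (Suc j) xs)) [0..<Suc k]"

definition power_convergent :: "nat \<Rightarrow> ('a::metric_space list \<Rightarrow> 'a) \<Rightarrow> bool" where
  "power_convergent k \<mu> \<longleftrightarrow>
     (\<forall>xs. length xs = Suc k \<longrightarrow>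
        (\<exists>x. \<forall>j<Suc k. (\<lambda>n. ((barycentric k \<mu> ^^ n) xs) ! j) \<longlonglongrightarrow> x))"

definition beta_extends :: "nat \<Rightarrow> ('a::metric_space list \<Rightarrow> 'a) \<Rightarrow> ('a list \<Rightarrow> 'a) \<Rightarrow> bool" where
  "beta_extends k \<mu> \<nu> \<longleftrightarrow>
     (\<forall>xs. length xs = Suc k \<longrightarrow>
        (\<forall>j<Suc k. (\<lambda>n. ((barycentric k \<mu> ^^ n) xs) ! j) \<longlonglongrightarrow> \<nu> xs))"

definition continuous_mean :: "nat \<Rightarrow> ('a::metric_space list \<Rightarrow> 'a) \<Rightarrow> bool" where
  "continuous_mean k \<nu> \<longleftrightarrow>
     (\<forall>xs. length xs = k \<longrightarrow> (\<forall>e>0. \<exists>d>0. \<forall>ys. length ys = k \<longrightarrow>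
        (\<forall>j<k. dist (xs ! j) (ys ! j) < d) \<longrightarrow> dist (\<nu> xs) (\<nu> ys) < e))"

end

theory Submission
  imports Defs
begin

text \<open>Measure a point of \<open>X\<^sup>k\<^sup>+\<^sup>1\<close> by the length of the polygonal path through its entries.
  Coordinatewise contractivity of \<open>\<mu>\<close> shrinks every edge of this path by the factor \<open>\<rho>\<close> under
  \<open>\<beta>\<close>, while nonexpansiveness and idempotency of \<open>\<mu>\<close> move each entry by at most the path length.
  Hence every coordinate of the orbit \<open>\<beta>\<^sup>n x\<close> takes geometrically decreasing steps and the
  diameter of \<open>\<beta>\<^sup>n x\<close> tends to zero, so all coordinates converge to one common limit
  \<open>\<nu> x\<close>. Since \<open>\<beta>\<close> is itself nonexpansive for the max metric and \<open>\<nu>\<close> is \<open>\<beta>\<close>-invariant, the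
  remaining properties of \<open>\<nu>\<close> follow by passing to the limit.\<close>

lemma dist_le_sum_dist_Suc:
  fixes z :: "nat \<Rightarrow> 'a::metric_space"
  assumes "m \<le> n"
  shows "dist (z m) (z n) \<le> (\<Sum>i\<in>{m..<n}. dist (z i) (z (Suc i)))"
  using assms
proof (induction n rule: dec_induct)
  case base
  then show ?case by simp
next
  case (step n)
  have "dist (z m) (z (Suc n)) \<le> dist (z m) (z n) + dist (z n) (z (Suc n))"
    by (rule dist_triangle)
  with step show ?case by simp
qed

lemma summable_dist_Suc_imp_Cauchy:
  fixes z :: "nat \<Rightarrow> 'a::metric_space"
  assumes "summable (\<lambda>n. dist (z n) (z (Suc n)))"
  shows "Cauchy z"
  unfolding Cauchy_altdef
proof (intro allI impI)
  fix e :: real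
  assume "0 < e"
  with assms obtain N
    where N: "\<forall>m\<ge>N. \<forall>n. norm (\<Sum>i\<in>{m..<n}. dist (z i) (z (Suc i))) < e"
    unfolding summable_Cauchy by blast
  have "dist (z m) (z n) < e" if "N \<le> m" "m < n" for m n
  proof -
    have "(\<Sum>i\<in>{m..<n}. dist (z i) (z (Suc i))) < e"
      using N that by (simp add: sum_nonneg)
    then show ?thesis
      using dist_le_sum_dist_Suc[of m n z] that by simp
  qed
  then show "\<exists>M. \<forall>m\<ge>M. \<forall>n>m. dist (z m) (z n) < e" by blast
qed

definition dist_max :: "nat \<Rightarrow> 'a::metric_space list \<Rightarrow> 'a list \<Rightarrow> real" where
  "dist_max n xs ys = Max {dist (xs ! j) (ys ! j) | j. j < n}"

lemma dist_max_eq_Max_image: "dist_max n xs ys = Max ((\<lambda>j. dist (xs ! j) (ys ! j)) ` {..<n})"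
  unfolding dist_max_def by (rule arg_cong[where f = Max]) auto

lemma dist_max_le_iff:
  "0 < n \<Longrightarrow> dist_max n xs ys \<le> B \<longleftrightarrow> (\<forall>j<n. dist (xs ! j) (ys ! j) \<le> B)"
  unfolding dist_max_eq_Max_image by (subst Max_le_iff) auto

lemma dist_max_less_iff:
  "0 < n \<Longrightarrow> dist_max n xs ys < B \<longleftrightarrow> (\<forall>j<n. dist (xs ! j) (ys ! j) < B)"
  unfolding dist_max_eq_Max_image by (subst Max_less_iff) auto

lemma dist_nth_le_dist_max: "j < n \<Longrightarrow> dist (xs ! j) (ys ! j) \<le> dist_max n xs ys"
  unfolding dist_max_eq_Max_image by (intro Max_ge) auto

lemma nonexpansive_meanD:
  "nonexpansive_mean k \<mu> \<Longrightarrow> length xs = k \<Longrightarrow> length ys = k \<Longrightarrow>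
    dist (\<mu> xs) (\<mu> ys) \<le> dist_max k xs ys"
  unfolding nonexpansive_mean_def dist_max_def by blast

lemma coord_contractiveD:
  "coord_contractive k \<rho> \<mu> \<Longrightarrow> length xs = k \<Longrightarrow> length ys = k \<Longrightarrow> j < k \<Longrightarrow>
    (\<And>i. i < k \<Longrightarrow> i \<noteq> j \<Longrightarrow> xs ! i = ys ! i) \<Longrightarrow>
    dist (\<mu> xs) (\<mu> ys) \<le> \<rho> * dist (xs ! j) (ys ! j)"
  unfolding coord_contractive_def by blast

lemma nonexpansive_mean_imp_continuous_mean:
  assumes "0 < n" "nonexpansive_mean n \<nu>"
  shows "continuous_mean n \<nu>"
  unfolding continuous_mean_def
proof (intro allI impI exI conjI)
  fix xs ys :: "'a list" and e :: real
  assume "length xs = n" "0 < e" "length ys = n" "\<forall>j<n. dist (xs ! j) (ys ! j) < e"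
  with assms have "dist_max n xs ys < e"
    by (simp add: dist_max_less_iff)
  moreover have "dist (\<nu> xs) (\<nu> ys) \<le> dist_max n xs ys"
    using assms(2) \<open>length xs = n\<close> \<open>length ys = n\<close> by (rule nonexpansive_meanD)
  ultimately show "dist (\<nu> xs) (\<nu> ys) < e"
    by linarith
qed

abbreviation remove_nth :: "nat \<Rightarrow> 'a list \<Rightarrow> 'a list" where
  "remove_nth i xs \<equiv> take i xs @ drop (Suc i) xs"

lemma nth_remove_nth:
  "i < length xs \<Longrightarrow> p < length xs - 1 \<Longrightarrow>
    remove_nth i xs ! p = xs ! (if p < i then p else Suc p)"
  by (auto simp: nth_append min_def)

definition path_length :: "'a::metric_space list \<Rightarrow> real" where
  "path_length xs = (\<Sum>i<length xs - 1. dist (xs ! i) (xs ! Suc i))"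

lemma dist_nth_le_path_length:
  assumes "i < length xs" "j < length xs"
  shows "dist (xs ! i) (xs ! j) \<le> path_length xs"
proof -
  have le: "dist (xs ! a) (xs ! b) \<le> path_length xs" if "a \<le> b" "b < length xs" for a b
  proof -
    have "dist (xs ! a) (xs ! b) \<le> (\<Sum>p\<in>{a..<b}. dist (xs ! p) (xs ! Suc p))"
      using dist_le_sum_dist_Suc[of a b "(!) xs"] that by simp
    also have "\<dots> \<le> path_length xs"
      unfolding path_length_def by (rule sum_mono2) (use that in auto)
    finally show ?thesis .
  qed
  show ?thesis
    using le[of i j] le[of j i] assms by (cases "i \<le> j") (auto simp: dist_commute)
qed

lemma length_barycentric [simp]: "length (barycentric k \<mu> xs) = Suc k"
  by (simp add: barycentric_def)

lemma nth_barycentric: "i < Suc k \<Longrightarrow> barycentric k \<mu> xs ! i = \<mu> (remove_nth i xs)"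
  by (simp add: barycentric_def del: upt_Suc)

lemma length_funpow_barycentric:
  "length xs = Suc k \<Longrightarrow> length ((barycentric k \<mu> ^^ n) xs) = Suc k"
  by (induction n) auto

lemma barycentric_replicate:
  assumes "is_mean k \<mu>"
  shows "barycentric k \<mu> (replicate (Suc k) x) = replicate (Suc k) x"
proof -
  have "remove_nth i (replicate (Suc k) x) = replicate k x" if "i < Suc k" for i
    using that by (simp only: take_replicate drop_replicate) (simp add: min_def flip: replicate_add)
  with assms show ?thesis
    by (intro nth_equalityI) (simp_all add: nth_barycentric is_mean_def del: replicate_Suc)
qed

lemma dist_barycentric_Suc_le:
  assumes "coord_contractive k \<rho> \<mu>" "length xs = Suc k" "i < k"
  shows "dist (barycentric k \<mu> xs ! i) (barycentric k \<mu> xs ! Suc i) \<le> \<rho> * dist (xs ! i) (xs ! Suc i)"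
proof -
  let ?a = "remove_nth i xs" and ?b = "remove_nth (Suc i) xs"
  have "dist (\<mu> ?a) (\<mu> ?b) \<le> \<rho> * dist (?a ! i) (?b ! i)"
    using assms by (intro coord_contractiveD) (auto simp: nth_remove_nth)
  moreover have "?a ! i = xs ! Suc i" "?b ! i = xs ! i"
    using assms by (auto simp: nth_remove_nth)
  ultimately show ?thesis
    using assms by (simp add: nth_barycentric dist_commute)
qed

lemma path_length_barycentric_le:
  assumes "coord_contractive k \<rho> \<mu>" "length xs = Suc k"
  shows "path_length (barycentric k \<mu> xs) \<le> \<rho> * path_length xs"
proof -
  have "(\<Sum>i<k. dist (barycentric k \<mu> xs ! i) (barycentric k \<mu> xs ! Suc i))
      \<le> (\<Sum>i<k. \<rho> * dist (xs ! i) (xs ! Suc i))"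
    using dist_barycentric_Suc_le[OF assms] by (intro sum_mono) simp
  with assms(2) show ?thesis
    by (simp add: path_length_def sum_distrib_left)
qed

lemma path_length_funpow_barycentric_le:
  assumes "coord_contractive k \<rho> \<mu>" "0 \<le> \<rho>" "length xs = Suc k"
  shows "path_length ((barycentric k \<mu> ^^ n) xs) \<le> \<rho> ^ n * path_length xs"
proof (induction n)
  case 0
  then show ?case by simp
next
  case (Suc n)
  have "path_length ((barycentric k \<mu> ^^ Suc n) xs) \<le> \<rho> * path_length ((barycentric k \<mu> ^^ n) xs)"
    using path_length_barycentric_le[OF assms(1) length_funpow_barycentric[OF assms(3)]] by simp
  also have "\<dots> \<le> \<rho> ^ Suc n * path_length xs"
    using Suc assms(2) by (metis mult.assoc mult_left_mono power_Suc)
  finally show ?case .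
qed

text \<open>Compare \<open>\<mu>\<close> on \<open>x\<close> with the \<open>i\<close>-th entry removed against \<open>\<mu>\<close> on the constant list
  \<open>x\<^sub>i, \<dots>, x\<^sub>i\<close>, whose value is \<open>x\<^sub>i\<close>.\<close>
lemma dist_barycentric_le_path_length:
  assumes "is_mean k \<mu>" "nonexpansive_mean k \<mu>" "0 < k" "length xs = Suc k" "i < Suc k"
  shows "dist (barycentric k \<mu> xs ! i) (xs ! i) \<le> path_length xs"
proof -
  have "dist (\<mu> (remove_nth i xs)) (\<mu> (replicate k (xs ! i))) \<le> dist_max k (remove_nth i xs) (replicate k (xs ! i))"
    using assms by (intro nonexpansive_meanD) auto
  also have "\<dots> \<le> path_length xs"
    using assms by (auto simp: dist_max_le_iff nth_remove_nth intro!: dist_nth_le_path_length)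
  finally show ?thesis
    using assms by (simp add: nth_barycentric is_mean_def)
qed

lemma dist_max_barycentric_le:
  assumes "nonexpansive_mean k \<mu>" "0 < k" "length xs = Suc k" "length ys = Suc k"
  shows "dist_max (Suc k) (barycentric k \<mu> xs) (barycentric k \<mu> ys) \<le> dist_max (Suc k) xs ys"
proof -
  have "dist (\<mu> (remove_nth i xs)) (\<mu> (remove_nth i ys)) \<le> dist_max (Suc k) xs ys"
    if "i < Suc k" for i
  proof -
    have "dist (\<mu> (remove_nth i xs)) (\<mu> (remove_nth i ys)) \<le> dist_max k (remove_nth i xs) (remove_nth i ys)"
      using assms that by (intro nonexpansive_meanD) auto
    also have "\<dots> \<le> dist_max (Suc k) xs ys"
      using assms that by (auto simp: dist_max_le_iff nth_remove_nth intro!: dist_nth_le_dist_max)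
    finally show ?thesis .
  qed
  then show ?thesis
    by (simp add: dist_max_le_iff nth_barycentric)
qed

lemma dist_max_funpow_barycentric_le:
  assumes "nonexpansive_mean k \<mu>" "0 < k" "length xs = Suc k" "length ys = Suc k"
  shows "dist_max (Suc k) ((barycentric k \<mu> ^^ n) xs) ((barycentric k \<mu> ^^ n) ys) \<le> dist_max (Suc k) xs ys"
proof (induction n)
  case 0
  then show ?case by simp
next
  case (Suc n)
  have "dist_max (Suc k) ((barycentric k \<mu> ^^ Suc n) xs) ((barycentric k \<mu> ^^ Suc n) ys)
      \<le> dist_max (Suc k) ((barycentric k \<mu> ^^ n) xs) ((barycentric k \<mu> ^^ n) ys)"
    using dist_max_barycentric_le[OF assms(1,2) length_funpow_barycentric[OF assms(3)]
        length_funpow_barycentric[OF assms(4)]] by simp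
  with Suc show ?case by linarith
qed

text \<open>Entry \<open>j\<close> of \<open>\<beta> x\<close> and \<open>\<beta> y\<close> coincide; for every other entry \<open>i\<close> the arguments of \<open>\<mu>\<close>
  differ only in entry \<open>j\<close> or \<open>j - 1\<close>, depending on whether \<open>j < i\<close>.\<close>
lemma dist_max_barycentric_le_coord:
  assumes "coord_contractive k \<rho> \<mu>" "0 \<le> \<rho>" "length xs = Suc k" "length ys = Suc k" "j < Suc k"
    and agree: "\<And>i. i < Suc k \<Longrightarrow> i \<noteq> j \<Longrightarrow> xs ! i = ys ! i"
  shows "dist_max (Suc k) (barycentric k \<mu> xs) (barycentric k \<mu> ys) \<le> \<rho> * dist (xs ! j) (ys ! j)"
proof -
  have "dist (\<mu> (remove_nth i xs)) (\<mu> (remove_nth i ys)) \<le> \<rho> * dist (xs ! j) (ys ! j)"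
    if i: "i < Suc k" for i
  proof (cases "i = j")
    case True
    have "remove_nth i xs = remove_nth i ys"
      using assms i True by (intro nth_equalityI) (auto simp: nth_remove_nth)
    then show ?thesis using assms(2) by simp
  next
    case False
    define j' where "j' = (if j < i then j else j - 1)"
    have j': "j' < k" "(if j' < i then j' else Suc j') = j"
      using False i assms(5) unfolding j'_def by auto
    have "dist (\<mu> (remove_nth i xs)) (\<mu> (remove_nth i ys))
        \<le> \<rho> * dist (remove_nth i xs ! j') (remove_nth i ys ! j')"
      using assms i j' by (intro coord_contractiveD) (auto simp: nth_remove_nth)
    with assms i j' show ?thesis by (simp add: nth_remove_nth)
  qed
  then show ?thesis
    by (simp add: dist_max_le_iff nth_barycentric)
qed

subsection \<open>Power convergence\<close>

context
  fixes \<mu> :: "'a::metric_space list \<Rightarrow> 'a" and k :: nat and \<rho> :: real and xs :: "'a list"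
  assumes cc: "coord_contractive k \<rho> \<mu>" and \<rho>: "0 \<le> \<rho>" "\<rho> < 1" and len: "length xs = Suc k"
begin

lemma dist_funpow_barycentric_tendsto_0:
  assumes "i < Suc k" "j < Suc k"
  shows "(\<lambda>n. dist ((barycentric k \<mu> ^^ n) xs ! i) ((barycentric k \<mu> ^^ n) xs ! j)) \<longlonglongrightarrow> 0"
proof (rule tendsto_sandwich[of "\<lambda>n. 0" _ _ "\<lambda>n. \<rho> ^ n * path_length xs"])
  have "dist ((barycentric k \<mu> ^^ n) xs ! i) ((barycentric k \<mu> ^^ n) xs ! j)
      \<le> \<rho> ^ n * path_length xs" for n
  proof -
    have "dist ((barycentric k \<mu> ^^ n) xs ! i) ((barycentric k \<mu> ^^ n) xs ! j)
        \<le> path_length ((barycentric k \<mu> ^^ n) xs)"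
      using assms length_funpow_barycentric[OF len, where \<mu> = \<mu>] by (intro dist_nth_le_path_length) auto
    also have "\<dots> \<le> \<rho> ^ n * path_length xs"
      by (rule path_length_funpow_barycentric_le[OF cc \<rho>(1) len])
    finally show ?thesis .
  qed
  then show "\<forall>\<^sub>F n in sequentially. dist ((barycentric k \<mu> ^^ n) xs ! i) ((barycentric k \<mu> ^^ n) xs ! j)
      \<le> \<rho> ^ n * path_length xs"
    by simp
  show "(\<lambda>n. \<rho> ^ n * path_length xs) \<longlonglongrightarrow> 0"
    using \<rho> by (intro tendsto_mult_left_zero LIMSEQ_power_zero) auto
qed auto

lemma Cauchy_funpow_barycentric:
  assumes "is_mean k \<mu>" "nonexpansive_mean k \<mu>" "0 < k" "i < Suc k"
  shows "Cauchy (\<lambda>n. (barycentric k \<mu> ^^ n) xs ! i)"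
proof (rule summable_dist_Suc_imp_Cauchy)
  have step: "dist ((barycentric k \<mu> ^^ n) xs ! i) ((barycentric k \<mu> ^^ Suc n) xs ! i)
      \<le> path_length xs * \<rho> ^ n" for n
  proof -
    have "dist ((barycentric k \<mu> ^^ Suc n) xs ! i) ((barycentric k \<mu> ^^ n) xs ! i)
        \<le> path_length ((barycentric k \<mu> ^^ n) xs)"
      using dist_barycentric_le_path_length[OF assms(1-3) length_funpow_barycentric[OF len] assms(4)]
      by simp
    also have "\<dots> \<le> path_length xs * \<rho> ^ n"
      using path_length_funpow_barycentric_le[OF cc \<rho>(1) len, of n] by (simp add: mult.commute)
    finally show ?thesis
      by (simp add: dist_commute)
  qed
  have "summable (\<lambda>n. path_length xs * \<rho> ^ n)"
    using \<rho> by (intro summable_mult summable_geometric) auto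
  then show "summable (\<lambda>n. dist ((barycentric k \<mu> ^^ n) xs ! i) ((barycentric k \<mu> ^^ Suc n) xs ! i))"
    by (rule summable_comparison_test') (use step in simp)
qed

end

lemma power_convergent_barycentric:
  fixes \<mu> :: "'a::complete_space list \<Rightarrow> 'a"
  assumes "is_mean k \<mu>" "nonexpansive_mean k \<mu>" "coord_contractive k \<rho> \<mu>"
    and "0 < k" "0 \<le> \<rho>" "\<rho> < 1"
  shows "power_convergent k \<mu>"
  unfolding power_convergent_def
proof (intro allI impI)
  fix xs :: "'a list"
  assume len: "length xs = Suc k"
  let ?orbit = "\<lambda>i n. (barycentric k \<mu> ^^ n) xs ! i"
  have "convergent (?orbit i)" if "i < Suc k" for i
    using Cauchy_funpow_barycentric[OF assms(3,5,6) len assms(1,2,4) that]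
    by (simp add: Cauchy_convergent_iff)
  then obtain l where l: "\<And>i. i < Suc k \<Longrightarrow> ?orbit i \<longlonglongrightarrow> l i"
    unfolding convergent_def by metis
  have "?orbit i \<longlonglongrightarrow> l 0" if "i < Suc k" for i
  proof -
    have "(\<lambda>n. dist (?orbit i n) (?orbit 0 n)) \<longlonglongrightarrow> dist (l i) (l 0)"
      using l that by (intro tendsto_dist) auto
    with dist_funpow_barycentric_tendsto_0[OF assms(3,5,6) len that]
    have "l i = l 0" using LIMSEQ_unique by fastforce
    with l[OF that] show ?thesis by simp
  qed
  then show "\<exists>x. \<forall>j<Suc k. ?orbit j \<longlonglongrightarrow> x" by blast
qed

subsection \<open>The \<open>\<beta>\<close>-extension\<close>

definition barycentric_extension :: "nat \<Rightarrow> ('a::metric_space list \<Rightarrow> 'a) \<Rightarrow> 'a list \<Rightarrow> 'a" where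
  "barycentric_extension k \<mu> xs = lim (\<lambda>n. (barycentric k \<mu> ^^ n) xs ! 0)"

lemma beta_extends_barycentric_extension:
  assumes "power_convergent k \<mu>"
  shows "beta_extends k \<mu> (barycentric_extension k \<mu>)"
  unfolding beta_extends_def
proof (intro allI impI)
  fix xs :: "'a list" and j
  assume "length xs = Suc k" "j < Suc k"
  with assms obtain x where x: "\<forall>j<Suc k. (\<lambda>n. (barycentric k \<mu> ^^ n) xs ! j) \<longlonglongrightarrow> x"
    unfolding power_convergent_def by blast
  then have "barycentric_extension k \<mu> xs = x"
    unfolding barycentric_extension_def by (simp add: limI)
  with x \<open>j < Suc k\<close> show "(\<lambda>n. (barycentric k \<mu> ^^ n) xs ! j) \<longlonglongrightarrow> barycentric_extension k \<mu> xs"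
    by simp
qed

lemma beta_extendsD:
  "beta_extends k \<mu> \<nu> \<Longrightarrow> length xs = Suc k \<Longrightarrow> j < Suc k \<Longrightarrow>
    (\<lambda>n. (barycentric k \<mu> ^^ n) xs ! j) \<longlonglongrightarrow> \<nu> xs"
  unfolding beta_extends_def by blast

lemma beta_extends_unique:
  assumes "beta_extends k \<mu> \<nu>" "beta_extends k \<mu> \<nu>'" "length xs = Suc k"
  shows "\<nu>' xs = \<nu> xs"
  using beta_extendsD[OF assms(1,3)] beta_extendsD[OF assms(2,3)] LIMSEQ_unique by blast

lemma beta_extends_barycentric_invariant:
  assumes "beta_extends k \<mu> \<nu>" "length xs = Suc k"
  shows "\<nu> (barycentric k \<mu> xs) = \<nu> xs"
proof -
  have "(\<lambda>n. (barycentric k \<mu> ^^ n) (barycentric k \<mu> xs) ! 0) \<longlonglongrightarrow> \<nu> (barycentric k \<mu> xs)"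
    using beta_extendsD[OF assms(1)] by simp
  moreover have "(\<lambda>n. (barycentric k \<mu> ^^ Suc n) xs ! 0) \<longlonglongrightarrow> \<nu> xs"
    using beta_extendsD[OF assms] by (intro LIMSEQ_Suc) simp
  ultimately show ?thesis
    by (simp add: funpow_swap1 LIMSEQ_unique)
qed

lemma beta_extends_imp_is_mean:
  assumes "is_mean k \<mu>" "beta_extends k \<mu> \<nu>"
  shows "is_mean (Suc k) \<nu>"
  unfolding is_mean_def
proof
  fix x
  have "(barycentric k \<mu> ^^ n) (replicate (Suc k) x) = replicate (Suc k) x" for n
    by (induction n) (simp_all add: barycentric_replicate[OF assms(1)] del: replicate_Suc)
  with beta_extendsD[OF assms(2), of "replicate (Suc k) x" 0]
  have "(\<lambda>n. x) \<longlonglongrightarrow> \<nu> (replicate (Suc k) x)"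
    by (simp del: replicate_Suc)
  then show "\<nu> (replicate (Suc k) x) = x"
    by (simp add: LIMSEQ_const_iff)
qed

lemma beta_extends_imp_nonexpansive_mean:
  assumes "nonexpansive_mean k \<mu>" "0 < k" "beta_extends k \<mu> \<nu>"
  shows "nonexpansive_mean (Suc k) \<nu>"
  unfolding nonexpansive_mean_def dist_max_def[symmetric]
proof (intro allI impI)
  fix xs ys :: "'a list"
  assume len: "length xs = Suc k" "length ys = Suc k"
  show "dist (\<nu> xs) (\<nu> ys) \<le> dist_max (Suc k) xs ys"
  proof (rule LIMSEQ_le_const2)
    show "(\<lambda>n. dist ((barycentric k \<mu> ^^ n) xs ! 0) ((barycentric k \<mu> ^^ n) ys ! 0))
        \<longlonglongrightarrow> dist (\<nu> xs) (\<nu> ys)"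
      using beta_extendsD[OF assms(3)] len by (intro tendsto_dist) auto
    show "\<exists>N. \<forall>n\<ge>N. dist ((barycentric k \<mu> ^^ n) xs ! 0) ((barycentric k \<mu> ^^ n) ys ! 0)
        \<le> dist_max (Suc k) xs ys"
    proof (intro exI allI impI)
      fix n
      have "dist ((barycentric k \<mu> ^^ n) xs ! 0) ((barycentric k \<mu> ^^ n) ys ! 0)
          \<le> dist_max (Suc k) ((barycentric k \<mu> ^^ n) xs) ((barycentric k \<mu> ^^ n) ys)"
        by (rule dist_nth_le_dist_max) simp
      also have "\<dots> \<le> dist_max (Suc k) xs ys"
        by (rule dist_max_funpow_barycentric_le[OF assms(1,2) len])
      finally show "dist ((barycentric k \<mu> ^^ n) xs ! 0) ((barycentric k \<mu> ^^ n) ys ! 0)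
          \<le> dist_max (Suc k) xs ys" .
    qed
  qed
qed

lemma beta_extends_imp_coord_contractive:
  assumes "coord_contractive k \<rho> \<mu>" "0 \<le> \<rho>" "nonexpansive_mean (Suc k) \<nu>" "beta_extends k \<mu> \<nu>"
  shows "coord_contractive (Suc k) \<rho> \<nu>"
  unfolding coord_contractive_def
proof (intro allI impI)
  fix xs ys :: "'a list" and j
  assume len: "length xs = Suc k" "length ys = Suc k" and "j < Suc k"
    and "\<forall>i<Suc k. i \<noteq> j \<longrightarrow> xs ! i = ys ! i"
  then have "dist_max (Suc k) (barycentric k \<mu> xs) (barycentric k \<mu> ys) \<le> \<rho> * dist (xs ! j) (ys ! j)"
    using assms(1,2) by (intro dist_max_barycentric_le_coord) auto
  moreover have "dist (\<nu> (barycentric k \<mu> xs)) (\<nu> (barycentric k \<mu> ys))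
      \<le> dist_max (Suc k) (barycentric k \<mu> xs) (barycentric k \<mu> ys)"
    using assms(3) by (intro nonexpansive_meanD) auto
  ultimately show "dist (\<nu> xs) (\<nu> ys) \<le> \<rho> * dist (xs ! j) (ys ! j)"
    using beta_extends_barycentric_invariant[OF assms(4)] len by simp
qed

theorem proposition3p13:
  fixes \<mu> :: "'a::complete_space list \<Rightarrow> 'a" and k :: nat and \<rho> :: real
  assumes "k \<ge> 2" and "0 < \<rho>" and "\<rho> < 1"
    and "is_mean k \<mu>" and "nonexpansive_mean k \<mu>" and "coord_contractive k \<rho> \<mu>"
  shows "power_convergent k \<mu> \<and>
    (\<exists>\<nu>. is_mean (Suc k) \<nu> \<and> continuous_mean (Suc k) \<nu> \<and> beta_extends k \<mu> \<nu> \<and>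
         (\<forall>\<nu>'. is_mean (Suc k) \<nu>' \<and> continuous_mean (Suc k) \<nu>' \<and> beta_extends k \<mu> \<nu>' \<longrightarrow>
               (\<forall>xs. length xs = Suc k \<longrightarrow> \<nu>' xs = \<nu> xs)) \<and>
         nonexpansive_mean (Suc k) \<nu> \<and> coord_contractive (Suc k) \<rho> \<nu>)"
proof -
  have "0 < k" "0 \<le> \<rho>" using assms(1,2) by auto
  have pc: "power_convergent k \<mu>"
    using power_convergent_barycentric assms \<open>0 < k\<close> \<open>0 \<le> \<rho>\<close> by blast
  define \<nu> where "\<nu> = barycentric_extension k \<mu>"
  have ext: "beta_extends k \<mu> \<nu>"
    unfolding \<nu>_def using pc by (rule beta_extends_barycentric_extension)
  have ne: "nonexpansive_mean (Suc k) \<nu>"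
    using beta_extends_imp_nonexpansive_mean assms(5) \<open>0 < k\<close> ext by blast
  show ?thesis
    using pc ext ne beta_extends_unique[OF ext] beta_extends_imp_is_mean[OF assms(4) ext]
      nonexpansive_mean_imp_continuous_mean[OF zero_less_Suc ne]
      beta_extends_imp_coord_contractive[OF assms(6) \<open>0 \<le> \<rho>\<close> ne ext]
    by blast
qed

end
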